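(* For each $n\ge1$ and $1\le j\le n$, $p_n^a(j)$ is increasing in $a_j$: if $a,a'\in A$ satisfy $a_k=a'_k$ for all $k\ne j$ and $a_j>a'_j$, then $p_n^a(j)>p_n^{a'}(j)$.
   Context: Let $A=\{(a_1,a_2,\dots): a_j\in\{1,\dots,j\}\text{ for all }j\}$. For $a\in A$, define permutations $p_n^a\in S_n$ recursively: $p_1^a$ is the permutation of $\{1\}$; for $n\ge2$, $p_n^a(n)=a_n$ and, for $1\le i\le n-1$, $p_n^a(i)=p_{n-1}^a(i)$ if $p_{n-1}^a(i)<a_n$ and $p_n^a(i)=p_{n-1}^a(i)+1$ if $p_{n-1}^a(i)\ge a_n$. (This is the Mallows process with insertion positions $p_j(j)=a_j$.) *)

theory Defs
  imports Main
begin

text \<open>Sequences are functions nat => nat indexed from 1; the value at 0 is irrelevant.\<close>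
definition seqA :: "(nat \<Rightarrow> nat) set" where
  "seqA = {a. \<forall>j\<ge>1. 1 \<le> a j \<and> a j \<le> j}"

text \<open>mallow a n i = p_n^a(i) for 1 <= i <= n (values outside are irrelevant).
  p_0 is the empty permutation; the recursion gives p_1(1) = a_1 = 1 for a in seqA.\<close>
fun mallow :: "(nat \<Rightarrow> nat) \<Rightarrow> nat \<Rightarrow> nat \<Rightarrow> nat" where
  "mallow a 0 i = i"
| "mallow a (Suc m) i =
     (if i = Suc m then a (Suc m)
      else if mallow a m i < a (Suc m) then mallow a m i
      else mallow a m i + 1)"

end

theory Submission
  imports Defs
begin

text \<open>After time \<open>j\<close> both processes insert at the same positions, and an insertion step
  \<open>x \<mapsto> if x < c then x else x + 1\<close> is strictly increasing, so the strict inequality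
  created at time \<open>j\<close> by \<open>a' j < a j\<close> persists.\<close>

lemma mallow_Suc_less_mallow_Suc:
  assumes "i \<noteq> Suc m" and "i' \<noteq> Suc m" and "a (Suc m) = a' (Suc m)"
    and "mallow a m i < mallow a' m i'"
  shows "mallow a (Suc m) i < mallow a' (Suc m) i'"
  using assms by auto

lemma mallow_less_mallow_from:
  assumes "j \<le> n" and "\<forall>k>j. a k = a' k" and "mallow a' j j < mallow a j j"
  shows "mallow a' n j < mallow a n j"
  using assms(1)
proof (induction n rule: dec_induct)
  case base
  show ?case using assms(3) .
next
  case (step m)
  then show ?case
    using mallow_Suc_less_mallow_Suc[of j m j a' a] assms(2) by auto
qed

theorem lemma3p1:
  fixes a a' :: "nat \<Rightarrow> nat" and n j :: nat
  assumes "n \<ge> 1" and "1 \<le> j" and "j \<le> n"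
    and "a \<in> seqA" and "a' \<in> seqA"
    and "\<forall>k\<ge>1. k \<noteq> j \<longrightarrow> a k = a' k"
    and "a j > a' j"
  shows "mallow a n j > mallow a' n j"
proof (rule mallow_less_mallow_from)
  show "j \<le> n" by fact
  show "\<forall>k>j. a k = a' k" using assms(2,6) by auto
  obtain m where "j = Suc m" using assms(2) by (cases j) auto
  then show "mallow a' j j < mallow a j j" using assms(7) by simp
qed

end
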